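(* Let $M\ge 1$ and $K\ge 1$ be integers and $\rho>0$. Let $\mathbf{h}_1,\ldots,\mathbf{h}_K$ be i.i.d. random vectors with $\mathbf{h}_k\sim\mathcal{CN}(\mathbf{0},\mathbf{I}_M)$, so that each $X_k=\|\mathbf{h}_k\|^2$ has CDF $F_X(x)=1-\Gamma(M,x)/\Gamma(M)$ for $x\ge0$. Let $\gamma=\rho\min_{1\le k\le K}X_k$, $g(\gamma)=1+\gamma$, and $\mathcal{M}_{g(\gamma)}(s)=\mathbb{E}\left[g(\gamma)^{s-1}\right]$. For $\beta>0$ and $s<1$ define $$\mathcal{B}(s,\beta)=\sum_{k=0}^{K}\sum_{j=0}^{kM}\binom{K}{k}\binom{kM}{j}(-1)^{k+j}e^{\frac{j\beta}{\rho}}\left(\frac{j\beta}{\rho}\right)^{1-s}\Gamma\!\left(s-1,\frac{j\beta}{\rho}\right),$$ where for $j=0$ the factor $e^{c}c^{1-s}\Gamma(s-1,c)$ (with $c=j\beta/\rho$) is understood as its limit $1/(1-s)$ as $c\to0^+$. Let $b=[\Gamma(1+M)]^{-1/M}$. Then for every $s<1$, $$1+(s-1)\mathcal{B}(s,b)\ \le\ \mathcal{M}_{g(\gamma)}(s)\ \le\ 1+(s-1)\mathcal{B}(s,1).$$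
   Context: $\Gamma(a,x)=\int_x^\infty t^{a-1}e^{-t}\,\mathrm{d}t$ is the upper incomplete gamma function (defined for all real $a$ when $x>0$), and $\Gamma(a)=\Gamma(a,0)$ for $a>0$. The notation $\mathcal{CN}(\mathbf{0},\mathbf{I}_M)$ denotes a circularly symmetric complex Gaussian vector in $\mathbb{C}^M$ with identity covariance. *)

theory Defs
  imports "HOL-Probability.Probability"
begin

definition upper_inc_gamma :: "real \<Rightarrow> real \<Rightarrow> real" where
  "upper_inc_gamma a x = (LINT t:{x..}|lborel. t powr (a - 1) * exp (- t))"

definition inc_gamma_factor :: "real \<Rightarrow> real \<Rightarrow> real" where
  "inc_gamma_factor s c =
     (if c = 0 then 1 / (1 - s) else exp c * c powr (1 - s) * upper_inc_gamma (s - 1) c)"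

definition Bfun :: "nat \<Rightarrow> nat \<Rightarrow> real \<Rightarrow> real \<Rightarrow> real \<Rightarrow> real" where
  "Bfun M K \<rho> s \<beta> =
     (\<Sum>k = 0..K. \<Sum>j = 0..k * M.
        real (K choose k) * real ((k * M) choose j) * (-1) ^ (k + j)
        * inc_gamma_factor s (real j * \<beta> / \<rho>))"

end

theory Submission
  imports Defs
begin

text \<open>
  Put m = min_k X_k. Since (1 + \<rho> m)^(s-1) = 1 - (1 - s) \<integral>_0^m \<rho> (1 + \<rho> t)^(s-2) dt, Tonelli's
  theorem gives E (1 + \<rho> m)^(s-1) = 1 - (1 - s) \<integral>_0^\<infinity> \<rho> (1 + \<rho> t)^(s-2) Q(t)^K dt, where
  Q(t) = P(X_k > t) is the Erlang tail e^(-t) \<Sum>_(n<M) t^n/n!. Alzer's inequalities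
  (1 - e^(-b t))^M \<le> 1 - Q(t) \<le> (1 - e^(-t))^M sandwich Q. Expanding (1 - (1 - e^(-\<beta> t))^M)^K
  binomially, every term becomes \<integral>_0^\<infinity> \<rho> (1 + \<rho> t)^(s-2) e^(-j \<beta> t) dt = e^c c^(1-s) \<Gamma>(s-1, c)
  with c = j \<beta> / \<rho>, and summing gives B(s, \<beta>). For the lower half of Alzer's inequality, the
  difference of the two sides vanishes at 0 and at \<infinity>, and its derivative changes sign at most
  once, from + to -, so it is nonnegative.
\<close>

section \<open>The Erlang tail\<close>

definition erlang_tail :: "nat \<Rightarrow> real \<Rightarrow> real" where
  "erlang_tail k x = exp (- x) * (\<Sum>n\<le>k. x ^ n / fact n)"

lemma erlang_tail_0 [simp]: "erlang_tail k 0 = 1"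
  by (induction k) (simp_all add: erlang_tail_def)

lemma erlang_tail_Suc:
  "erlang_tail (Suc k) x = erlang_tail k x + exp (- x) * (x ^ Suc k / fact (Suc k))"
  by (simp add: erlang_tail_def algebra_simps)

lemma erlang_tail_nonneg: "0 \<le> x \<Longrightarrow> 0 \<le> erlang_tail k x"
  unfolding erlang_tail_def by (intro mult_nonneg_nonneg sum_nonneg) auto

lemma borel_measurable_erlang_tail [measurable]: "erlang_tail k \<in> borel_measurable borel"
  unfolding erlang_tail_def[abs_def] by measurable

lemma has_real_derivative_power_div_fact:
  "((\<lambda>x::real. x ^ Suc k / fact (Suc k)) has_real_derivative x ^ k / fact k) (at x)"
proof -
  have "((\<lambda>x::real. x ^ Suc k / fact (Suc k)) has_real_derivative
      real (Suc k) * x ^ k / fact (Suc k)) (at x)"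
    by (intro DERIV_cdivide) (use DERIV_pow[of "Suc k" x] in simp)
  then show ?thesis by (simp add: fact_Suc del: of_nat_Suc)
qed

lemma has_real_derivative_erlang_tail:
  "(erlang_tail k has_real_derivative - (x ^ k * exp (- x) / fact k)) (at x)"
proof (induction k)
  case 0
  have "erlang_tail 0 = (\<lambda>x. exp (- x))"
    by (simp add: erlang_tail_def fun_eq_iff)
  then show ?case by (auto intro!: derivative_eq_intros)
next
  case (Suc k)
  have "((\<lambda>x. exp (- x)) has_real_derivative - exp (- x)) (at x)"
    by (auto intro!: derivative_eq_intros)
  from DERIV_add[OF Suc DERIV_mult[OF this has_real_derivative_power_div_fact[of k x]]]
  have "((\<lambda>x. erlang_tail k x + exp (- x) * (x ^ Suc k / fact (Suc k))) has_real_derivative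
      - (x ^ Suc k * exp (- x) / fact (Suc k))) (at x)"
    by (rule DERIV_cong) (simp add: algebra_simps)
  then show ?case
    by (simp add: erlang_tail_Suc[abs_def])
qed

lemma erlang_tail_le_one:
  assumes "0 \<le> x"
  shows "erlang_tail k x \<le> 1"
proof -
  have "erlang_tail k x \<le> erlang_tail k 0"
  proof (rule DERIV_nonpos_imp_nonincreasing[of 0 x "erlang_tail k", OF assms])
    fix t :: real assume "0 \<le> t"
    then show "\<exists>d. (erlang_tail k has_real_derivative d) (at t) \<and> d \<le> 0"
      using has_real_derivative_erlang_tail by fastforce
  qed
  then show ?thesis
    by simp
qed

lemma erlang_tail_tendsto_0: "(erlang_tail k \<longlongrightarrow> 0) at_top"
proof -
  have "erlang_tail k = (\<lambda>x. \<Sum>n\<le>k. x ^ n / exp x / fact n)"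
    by (simp add: fun_eq_iff erlang_tail_def sum_distrib_left exp_minus field_simps)
  moreover have "((\<lambda>x::real. \<Sum>n\<le>k. x ^ n / exp x / fact n) \<longlongrightarrow> (\<Sum>n\<le>k. 0)) at_top"
    by (intro tendsto_sum tendsto_divide_zero tendsto_power_div_exp_0)
  ultimately show ?thesis by simp
qed

lemma upper_inc_gamma_Suc_eq_erlang_tail:
  assumes "0 \<le> x"
  shows "upper_inc_gamma (real (Suc k)) x = fact k * erlang_tail k x"
proof -
  let ?f = "\<lambda>t::real. t ^ k * exp (- t) * indicator {x..} t"
  have "((\<lambda>t. - fact k * erlang_tail k t) has_real_derivative t ^ k * exp (- t)) (at t)" for t
    using DERIV_cmult[OF has_real_derivative_erlang_tail, of "- fact k" k t] by simp
  moreover have "((\<lambda>t. - fact k * erlang_tail k t) \<longlongrightarrow> 0) at_top"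
    using tendsto_mult_right_zero[OF erlang_tail_tendsto_0, of "- fact k"] by simp
  ultimately have "(\<integral>\<^sup>+t. ennreal (t ^ k * exp (- t)) * indicator {x..} t \<partial>lborel)
      = ennreal (fact k * erlang_tail k x)"
    using assms by (subst nn_integral_FTC_atLeast[where T = 0]) auto
  then have "has_bochner_integral lborel ?f (fact k * erlang_tail k x)"
    using assms
    by (intro has_bochner_integral_nn_integral)
       (auto simp: erlang_tail_nonneg indicator_mult_ennreal mult.commute split: split_indicator)
  moreover have "upper_inc_gamma (real (Suc k)) x = (\<integral>t. ?f t \<partial>lborel)"
    unfolding upper_inc_gamma_def set_lebesgue_integral_def
    using AE_lborel_singleton[of 0] assms
    by (intro integral_cong_AE) (auto elim!: eventually_mono simp: powr_realpow split: split_indicator)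
  ultimately show ?thesis by (simp add: has_bochner_integral_integral_eq)
qed

section \<open>Alzer's inequality for the Erlang tail\<close>

lemma one_minus_erlang_tail_le_power:
  assumes "0 \<le> x"
  shows "1 - erlang_tail k x \<le> x ^ Suc k / fact (Suc k)"
proof -
  let ?h = "\<lambda>x. x ^ Suc k / fact (Suc k) + erlang_tail k x"
  have "?h 0 \<le> ?h x"
  proof (rule DERIV_nonneg_imp_nondecreasing[OF assms])
    fix t :: real assume "0 \<le> t"
    have "(?h has_real_derivative t ^ k / fact k + - (t ^ k * exp (- t) / fact k)) (at t)"
      by (intro DERIV_add has_real_derivative_power_div_fact has_real_derivative_erlang_tail)
    moreover have "t ^ k * exp (- t) / fact k \<le> t ^ k / fact k"
      using \<open>0 \<le> t\<close> by (simp add: divide_right_mono mult_left_le)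
    ultimately show "\<exists>d. (?h has_real_derivative d) (at t) \<and> 0 \<le> d"
      by force
  qed
  then show ?thesis by simp
qed

lemma one_minus_erlang_tail_le:
  assumes "0 \<le> x"
  shows "1 - erlang_tail k x \<le> (1 - exp (- x)) ^ Suc k"
proof (induction k)
  case 0
  then show ?case by (simp add: erlang_tail_def)
next
  case (Suc k)
  have "1 - erlang_tail (Suc k) x
      = (1 - exp (- x)) * (1 - erlang_tail k x)
        + exp (- x) * ((1 - erlang_tail k x) - x ^ Suc k / fact (Suc k))"
    by (simp add: erlang_tail_Suc algebra_simps)
  also have "\<dots> \<le> (1 - exp (- x)) * (1 - erlang_tail k x)"
    using one_minus_erlang_tail_le_power[OF assms, of k] by (simp add: mult_le_0_iff)
  also have "\<dots> \<le> (1 - exp (- x)) ^ Suc (Suc k)"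
    using Suc assms by (simp add: mult_left_mono)
  finally show ?case .
qed

definition positive_persists :: "(real \<Rightarrow> real) \<Rightarrow> bool" where
  "positive_persists f \<longleftrightarrow> (\<forall>t y. 0 < t \<longrightarrow> t < y \<longrightarrow> 0 < f t \<longrightarrow> 0 < f y)"

lemma positive_persists_cong:
  assumes "\<And>t. 0 < t \<Longrightarrow> 0 < f t \<longleftrightarrow> 0 < g t"
  shows "positive_persists f \<longleftrightarrow> positive_persists g"
  using assms unfolding positive_persists_def by (meson order.strict_trans)

lemma positive_persists_rescale:
  assumes "positive_persists f" and "0 < b"
  shows "positive_persists (\<lambda>t. f (b * t))"
  using assms unfolding positive_persists_def by (metis mult_pos_pos mult_strict_left_mono)

lemma positive_persists_antiderivative:
  assumes "f 0 = 0"
    and deriv: "\<And>z. 0 \<le> z \<Longrightarrow> (f has_real_derivative f' z) (at z)"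
    and persists: "positive_persists f'"
  shows "positive_persists f"
  unfolding positive_persists_def
proof (intro allI impI)
  fix t y :: real
  assume t: "0 < t" "t < y" "0 < f t"
  obtain z where z: "0 < z" "z < t" "f t - f 0 = (t - 0) * f' z"
    using MVT2[OF \<open>0 < t\<close>] deriv by force
  then have "0 < f' z"
    using t \<open>f 0 = 0\<close> by (simp add: zero_less_mult_iff)
  have "f t \<le> f y"
  proof (rule DERIV_nonneg_imp_nondecreasing[of t y f])
    fix w assume "t \<le> w" "w \<le> y"
    then have "0 < f' w"
      using persists \<open>0 < f' z\<close> z unfolding positive_persists_def by force
    then show "\<exists>d. (f has_real_derivative d) (at w) \<and> 0 \<le> d"
      using deriv[of w] \<open>t \<le> w\<close> t by force
  qed (use t in simp)
  then show "0 < f y"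
    using t by simp
qed

lemma nonneg_if_derivative_changes_sign_once:
  fixes D D' :: "real \<Rightarrow> real"
  assumes deriv: "\<And>t. 0 \<le> t \<Longrightarrow> (D has_real_derivative D' t) (at t)"
    and once: "positive_persists (\<lambda>t. - D' t)"
    and "0 \<le> D 0" and lim: "(D \<longlongrightarrow> l) at_top" and "0 \<le> l" and "0 \<le> x"
  shows "0 \<le> D x"
proof (cases "\<exists>t. 0 < t \<and> t \<le> x \<and> D' t < 0")
  case False
  have "D 0 \<le> D x"
  proof (rule DERIV_nonneg_imp_increasing_open[of 0 x D, OF \<open>0 \<le> x\<close>])
    fix t assume "0 < t" "t < x"
    then have "0 \<le> D' t"
      using False by (meson less_eq_real_def not_le)
    then show "\<exists>d. (D has_real_derivative d) (at t) \<and> 0 \<le> d"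
      using deriv[of t] \<open>0 < t\<close> by auto
  next
    show "continuous_on {0..x} D"
      using deriv by (intro continuous_at_imp_continuous_on ballI DERIV_isCont) auto
  qed
  then show ?thesis
    using \<open>0 \<le> D 0\<close> by simp
next
  case True
  then obtain t where t: "0 < t" "t \<le> x" "D' t < 0"
    by blast
  have "D y \<le> D x" if "x \<le> y" for y
  proof (rule DERIV_nonpos_imp_nonincreasing[of x y D, OF that])
    fix w assume w: "x \<le> w" "w \<le> y"
    have "D' w < 0"
    proof (cases "w = t")
      case False
      then show ?thesis
        using once t w unfolding positive_persists_def by force
    qed (use t in simp)
    then show "\<exists>d. (D has_real_derivative d) (at w) \<and> d \<le> 0"
      using deriv[of w] w t by force
  qed
  then have "l \<le> D x"
    by (intro tendsto_upperbound[OF lim]) (auto simp: eventually_at_top_linorder)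
  then show ?thesis
    using \<open>0 \<le> l\<close> by simp
qed

definition alzer_gap :: "real \<Rightarrow> real \<Rightarrow> real" where
  "alzer_gap c z = exp (c * z) - exp ((c - 1) * z) - z"

lemma positive_persists_alzer_gap: "positive_persists (alzer_gap c)"
proof -
  \<comment> \<open>The second derivative has the sign of c^2 e^z - (c - 1)^2, which increases with z.\<close>
  define d1 where "d1 z = c * exp (c * z) - (c - 1) * exp ((c - 1) * z) - 1" for z
  define d2 where "d2 z = c\<^sup>2 * exp (c * z) - (c - 1)\<^sup>2 * exp ((c - 1) * z)" for z
  have d2_eq: "d2 z = exp ((c - 1) * z) * (c\<^sup>2 * exp z - (c - 1)\<^sup>2)" for z
    unfolding d2_def by (simp add: algebra_simps flip: exp_add)
  have d2_persists: "positive_persists d2"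
    unfolding positive_persists_def
  proof (intro allI impI)
    fix t y :: real assume "0 < t" "t < y" "0 < d2 t"
    moreover have "c\<^sup>2 * exp t \<le> c\<^sup>2 * exp y"
      using \<open>t < y\<close> by (intro mult_left_mono) auto
    ultimately show "0 < d2 y"
      by (simp add: d2_eq zero_less_mult_iff)
  qed
  have d1_deriv: "(d1 has_real_derivative d2 z) (at z)" for z
    unfolding d1_def[abs_def] d2_def
    by (auto intro!: derivative_eq_intros simp: algebra_simps power2_eq_square)
  have d1_persists: "positive_persists d1"
    by (rule positive_persists_antiderivative[where f' = d2])
       (use d2_persists d1_deriv in \<open>auto simp: d1_def\<close>)
  have gap_deriv: "(alzer_gap c has_real_derivative d1 z) (at z)" for z
    unfolding alzer_gap_def[abs_def] d1_def
    by (auto intro!: derivative_eq_intros simp: algebra_simps)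
  show ?thesis
    by (rule positive_persists_antiderivative[where f' = d1])
       (use d1_persists gap_deriv in \<open>auto simp: alzer_gap_def\<close>)
qed

lemma erlang_density_less_iff_alzer_gap:
  fixes b t :: real
  assumes "0 < k" "0 < b" "b ^ Suc k * fact (Suc k) = 1" "0 < t"
  shows "t ^ k * exp (- t) / fact k < real (Suc k) * (1 - exp (- (b * t))) ^ k * (b * exp (- (b * t)))
    \<longleftrightarrow> 0 < alzer_gap ((1 - b) / (b * real k)) (b * t)"
    (is "?f < ?g \<longleftrightarrow> _")
proof -
  \<comment> \<open>Multiplied by k! b^k e^(b t), the two sides become (z e^(-c z))^k and (1 - e^(-z))^k.\<close>
  define c where "c = (1 - b) / (b * real k)"
  define z where "z = b * t"
  define u where "u = z * exp (- (c * z))"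
  define v where "v = 1 - exp (- z)"
  define P where "P = fact k * b ^ k * exp (b * t)"
  have "0 < z" "0 < P"
    using assms by (simp_all add: z_def P_def)
  have "real k * (c * z) = (1 - b) * t"
    using assms by (simp add: c_def z_def field_simps)
  then have "exp (- (c * z)) ^ k = exp (- t) * exp (b * t)"
    by (simp add: exp_of_nat_mult[symmetric] algebra_simps flip: exp_add)
  then have f: "?f * P = u ^ k"
    by (simp add: P_def u_def z_def power_mult_distrib)
  have "?g * P = (b ^ Suc k * fact (Suc k)) * v ^ k * (exp (- (b * t)) * exp (b * t))"
    by (simp add: P_def v_def z_def fact_Suc del: of_nat_Suc)
  also have "\<dots> = v ^ k"
    unfolding assms(3) by (simp flip: exp_add)
  finally have g: "?g * P = v ^ k" .
  have "?f < ?g \<longleftrightarrow> u ^ k < v ^ k"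
    using \<open>0 < P\<close> f g by (metis mult_less_cancel_right_pos)
  also have "\<dots> \<longleftrightarrow> u < v"
  proof -
    have "0 \<le> u" "0 \<le> v"
      using \<open>0 < z\<close> by (simp_all add: u_def v_def)
    then show ?thesis
      using \<open>0 < k\<close> by (metis power_mono_iff not_le)
  qed
  also have "\<dots> \<longleftrightarrow> 0 < exp (c * z) * (v - u)"
    by (simp add: zero_less_mult_iff)
  also have "exp (c * z) * (v - u) = alzer_gap c z"
    by (simp add: u_def v_def alzer_gap_def algebra_simps flip: exp_add)
  finally show ?thesis
    by (simp add: c_def z_def)
qed

lemma positive_persists_alzer_density_gap:
  fixes b :: real
  assumes "0 < k" "0 < b" "b ^ Suc k * fact (Suc k) = 1"
  shows "positive_persists (\<lambda>t. real (Suc k) * (1 - exp (- (b * t))) ^ k * (b * exp (- (b * t)))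
    - t ^ k * exp (- t) / fact k)"
    (is "positive_persists (\<lambda>t. ?g t - ?f t)")
proof -
  have "0 < ?g t - ?f t \<longleftrightarrow> 0 < alzer_gap ((1 - b) / (b * real k)) (b * t)" if "0 < t" for t
    using erlang_density_less_iff_alzer_gap[OF assms that] by linarith
  then have "positive_persists (\<lambda>t. ?g t - ?f t)
      \<longleftrightarrow> positive_persists (\<lambda>t. alzer_gap ((1 - b) / (b * real k)) (b * t))"
    by (rule positive_persists_cong)
  then show ?thesis
    using positive_persists_rescale[OF positive_persists_alzer_gap \<open>0 < b\<close>] by simp
qed

lemma erlang_tail_le_alzer:
  fixes b x :: real
  assumes "0 \<le> x" "0 < b" "b ^ Suc k * fact (Suc k) = 1"
  shows "erlang_tail k x \<le> 1 - (1 - exp (- (b * x))) ^ Suc k"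
proof (cases "k = 0")
  case True
  then show ?thesis
    using assms by (simp add: erlang_tail_def)
next
  case False
  define f where "f t = t ^ k * exp (- t) / fact k" for t :: real
  define g where "g t = real (Suc k) * (1 - exp (- (b * t))) ^ k * (b * exp (- (b * t)))" for t :: real
  define D where "D t = (1 - erlang_tail k t) - (1 - exp (- (b * t))) ^ Suc k" for t
  have g_deriv: "((\<lambda>t. (1 - exp (- (b * t))) ^ Suc k) has_real_derivative g t) (at t)" for t
  proof -
    have "((\<lambda>t. 1 - exp (- (b * t))) has_real_derivative b * exp (- (b * t))) (at t)"
      by (auto intro!: derivative_eq_intros)
    from DERIV_power[OF this, of "Suc k"] show ?thesis
      by (simp add: g_def algebra_simps)
  qed
  have D_deriv: "(D has_real_derivative f t - g t) (at t)" for t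
    unfolding D_def[abs_def] f_def
    using DERIV_diff[OF DERIV_diff[OF DERIV_const has_real_derivative_erlang_tail] g_deriv] by simp
  have D'_persists: "positive_persists (\<lambda>t. - (f t - g t))"
    using positive_persists_alzer_density_gap[OF _ assms(2,3)] False by (simp add: f_def g_def)
  have "LIM t at_top. - (b * t) :> at_bot"
    unfolding filterlim_uminus_at_top[symmetric]
    by (rule filterlim_tendsto_pos_mult_at_top[OF tendsto_const \<open>0 < b\<close> filterlim_ident])
  then have "((\<lambda>t. exp (- (b * t))) \<longlongrightarrow> 0) at_top"
    by (rule filterlim_compose[OF exp_at_bot])
  then have "(D \<longlongrightarrow> (1 - 0) - (1 - 0) ^ Suc k) at_top"
    unfolding D_def[abs_def] by (intro tendsto_diff tendsto_power tendsto_const erlang_tail_tendsto_0)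
  then have D_lim: "(D \<longlongrightarrow> 0) at_top"
    by simp
  have "0 \<le> D x"
    by (rule nonneg_if_derivative_changes_sign_once[OF _ D'_persists _ D_lim])
       (use D_deriv \<open>0 \<le> x\<close> in \<open>auto simp: D_def\<close>)
  then show ?thesis
    by (simp add: D_def)
qed

section \<open>Integrals against the weight \<rho> (1 + \<rho> t) powr (s - 2)\<close>

definition tail_weight :: "real \<Rightarrow> real \<Rightarrow> real \<Rightarrow> real" where
  "tail_weight \<rho> s t = indicator {0..} t * (\<rho> * (1 + \<rho> * t) powr (s - 2))"

lemma tail_weight_nonneg: "0 \<le> \<rho> \<Longrightarrow> 0 \<le> tail_weight \<rho> s t"
  by (simp add: tail_weight_def)

lemma borel_measurable_tail_weight [measurable]: "tail_weight \<rho> s \<in> borel_measurable borel"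
  unfolding tail_weight_def[abs_def] by measurable

lemma has_real_derivative_one_plus_powr:
  assumes "0 < \<rho>" "s < 1" "0 \<le> t"
  shows "((\<lambda>t. - ((1 + \<rho> * t) powr (s - 1) / (1 - s))) has_real_derivative
      \<rho> * (1 + \<rho> * t) powr (s - 2)) (at t)"
proof -
  have "0 < 1 + \<rho> * t"
    using assms by (simp add: add_pos_nonneg)
  then have "((\<lambda>t. - ((1 + \<rho> * t) powr (s - 1) / (1 - s))) has_real_derivative
      - ((s - 1) * (1 + \<rho> * t) powr (s - 1 - 1) * \<rho> / (1 - s))) (at t)"
    using \<open>s < 1\<close> by (auto intro!: derivative_eq_intros)
  then show ?thesis
    by (rule DERIV_cong) (use assms in \<open>simp add: field_simps\<close>)
qed

lemma nn_integral_tail_weight_lessThan: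
  assumes "0 < \<rho>" "s < 1" "0 \<le> y"
  shows "(\<integral>\<^sup>+t. ennreal (tail_weight \<rho> s t) * indicator {..<y} t \<partial>lborel)
    = ennreal ((1 - (1 + \<rho> * y) powr (s - 1)) / (1 - s))"
proof -
  have "(\<integral>\<^sup>+t. ennreal (\<rho> * (1 + \<rho> * t) powr (s - 2)) * indicator {0..y} t \<partial>lborel)
      = ennreal (- ((1 + \<rho> * y) powr (s - 1) / (1 - s)) - - ((1 + \<rho> * 0) powr (s - 1) / (1 - s)))"
    using assms by (intro nn_integral_FTC_Icc has_real_derivative_one_plus_powr) auto
  also have "\<dots> = ennreal ((1 - (1 + \<rho> * y) powr (s - 1)) / (1 - s))"
    by (simp add: diff_divide_distrib)
  also have "(\<integral>\<^sup>+t. ennreal (\<rho> * (1 + \<rho> * t) powr (s - 2)) * indicator {0..y} t \<partial>lborel)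
      = (\<integral>\<^sup>+t. ennreal (tail_weight \<rho> s t) * indicator {..<y} t \<partial>lborel)"
    using AE_lborel_singleton[of y]
    by (intro nn_integral_cong_AE) (auto elim!: eventually_mono simp: tail_weight_def split: split_indicator)
  finally show ?thesis .
qed

lemma has_bochner_integral_tail_weight:
  assumes "0 < \<rho>" "s < 1"
  shows "has_bochner_integral lborel (tail_weight \<rho> s) (1 / (1 - s))"
proof (rule has_bochner_integral_nn_integral)
  have "filterlim (\<lambda>t. 1 + \<rho> * t) at_top at_top"
    using assms
    by (intro filterlim_tendsto_add_at_top[OF tendsto_const]
        filterlim_tendsto_pos_mult_at_top[OF tendsto_const _ filterlim_ident]) auto
  then have "((\<lambda>t. - ((1 + \<rho> * t) powr (s - 1) / (1 - s))) \<longlongrightarrow> - (0 / (1 - s))) at_top"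
    using assms by (intro tendsto_minus tendsto_divide tendsto_neg_powr) auto
  then have "(\<integral>\<^sup>+t. ennreal (\<rho> * (1 + \<rho> * t) powr (s - 2)) * indicator {0..} t \<partial>lborel)
      = ennreal (0 - - ((1 + \<rho> * 0) powr (s - 1) / (1 - s)))"
    using assms by (intro nn_integral_FTC_atLeast has_real_derivative_one_plus_powr) auto
  then show "(\<integral>\<^sup>+t. ennreal (tail_weight \<rho> s t) \<partial>lborel) = ennreal (1 / (1 - s))"
    by (simp add: tail_weight_def mult.commute indicator_mult_ennreal)
qed (use assms in \<open>auto simp: tail_weight_nonneg\<close>)

lemma integrable_tail_weight_mult:
  assumes "0 < \<rho>" "s < 1" "f \<in> borel_measurable borel" "\<And>t. 0 \<le> t \<Longrightarrow> \<bar>f t\<bar> \<le> 1"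
  shows "integrable lborel (\<lambda>t. tail_weight \<rho> s t * f t)"
proof (rule Bochner_Integration.integrable_bound)
  show "integrable lborel (tail_weight \<rho> s)"
    using has_bochner_integral_tail_weight[OF assms(1,2)] by (rule integrable.intros)
  show "AE t in lborel. norm (tail_weight \<rho> s t * f t) \<le> norm (tail_weight \<rho> s t)"
  proof (intro AE_I2)
    fix t :: real
    show "norm (tail_weight \<rho> s t * f t) \<le> norm (tail_weight \<rho> s t)"
    proof (cases "0 \<le> t")
      case True
      then show ?thesis
        using assms(4)[OF True] tail_weight_nonneg[of \<rho> s t] assms(1)
        by (simp add: abs_mult mult_left_le)
    qed (simp add: tail_weight_def)
  qed
qed (use assms(3) in measurable)

lemma upper_inc_gamma_eq_integral_tail_weight:
  assumes "0 < \<rho>" "0 < c"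
  shows "upper_inc_gamma (s - 1) c
    = c powr (s - 1) * exp (- c) * (\<integral>t. tail_weight \<rho> s t * exp (- (c * \<rho> * t)) \<partial>lborel)"
proof -
  define a where "a = c * \<rho>"
  have "0 < a"
    using assms by (simp add: a_def)
  have integrand: "indicator {c..} (c + a * t) * ((c + a * t) powr (s - 2) * exp (- (c + a * t)))
      = c powr (s - 2) * exp (- c) / \<rho> * (tail_weight \<rho> s t * exp (- (a * t)))" for t
  proof (cases "0 \<le> t")
    case True
    have "c + a * t = c * (1 + \<rho> * t)"
      by (simp add: a_def algebra_simps)
    then have "(c + a * t) powr (s - 2) = c powr (s - 2) * (1 + \<rho> * t) powr (s - 2)"
      using assms True by (simp add: powr_mult)
    moreover have "exp (- (c + a * t)) = exp (- c) * exp (- (a * t))"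
      by (simp flip: exp_add)
    ultimately show ?thesis
      using True \<open>0 < a\<close> assms by (simp add: tail_weight_def)
  next
    case False
    then have "c + a * t < c"
      using \<open>0 < a\<close> by (simp add: mult_pos_neg)
    then show ?thesis
      using False by (simp add: tail_weight_def)
  qed
  have "upper_inc_gamma (s - 1) c = (\<integral>v. indicator {c..} v * (v powr (s - 2) * exp (- v)) \<partial>lborel)"
    by (simp add: upper_inc_gamma_def set_lebesgue_integral_def)
  also have "\<dots> = \<bar>a\<bar> *\<^sub>R
      (\<integral>t. indicator {c..} (c + a * t) * ((c + a * t) powr (s - 2) * exp (- (c + a * t))) \<partial>lborel)"
    by (rule lborel_integral_real_affine) (use \<open>0 < a\<close> in simp)
  also have "\<dots> = (c * c powr (s - 2)) * exp (- c) * (\<integral>t. tail_weight \<rho> s t * exp (- (a * t)) \<partial>lborel)"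
    unfolding integrand using \<open>0 < a\<close> assms by (simp add: a_def)
  also have "c * c powr (s - 2) = c powr (s - 1)"
    using \<open>0 < c\<close> by (simp add: powr_mult_base algebra_simps)
  finally show ?thesis
    by (simp add: a_def)
qed

lemma integral_tail_weight_exp:
  assumes "0 < \<rho>" "s < 1" "0 \<le> a"
  shows "(\<integral>t. tail_weight \<rho> s t * exp (- (a * t)) \<partial>lborel) = inc_gamma_factor s (a / \<rho>)"
proof (cases "a = 0")
  case True
  then show ?thesis
    using has_bochner_integral_integral_eq[OF has_bochner_integral_tail_weight[OF assms(1,2)]]
    by (simp add: inc_gamma_factor_def)
next
  case False
  define c where "c = a / \<rho>"
  have "0 < c" "a = c * \<rho>"
    using False assms by (simp_all add: c_def)
  then have "inc_gamma_factor s c = (exp c * exp (- c)) * (c powr (1 - s) * c powr (s - 1))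
      * (\<integral>t. tail_weight \<rho> s t * exp (- (a * t)) \<partial>lborel)"
    by (simp add: inc_gamma_factor_def upper_inc_gamma_eq_integral_tail_weight[OF assms(1)])
  also have "\<dots> = (\<integral>t. tail_weight \<rho> s t * exp (- (a * t)) \<partial>lborel)"
    using \<open>0 < c\<close> by (simp flip: exp_add powr_add)
  finally show ?thesis
    by (simp add: c_def)
qed

lemma one_minus_power_binomial:
  "(1 - y) ^ n = (\<Sum>k = 0..n. real (n choose k) * (-1) ^ k * y ^ k)"
proof -
  have "(1 - y) ^ n = (- y + 1) ^ n"
    by simp
  also have "\<dots> = (\<Sum>k\<le>n. real (n choose k) * (- y) ^ k * 1 ^ (n - k))"
    by (rule binomial_ring)
  finally show ?thesis
    by (simp add: atLeast0AtMost power_minus[of y] mult.assoc)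
qed

lemma one_minus_power_power_expand:
  "(1 - (1 - y) ^ M) ^ K = (\<Sum>k = 0..K. \<Sum>j = 0..k * M.
      real (K choose k) * real ((k * M) choose j) * (-1) ^ (k + j) * y ^ j)"
proof -
  have "(1 - (1 - y) ^ M) ^ K = (\<Sum>k = 0..K. real (K choose k) * (-1) ^ k * (1 - y) ^ (k * M))"
    by (simp add: one_minus_power_binomial[of "(1 - y) ^ M"] power_mult[symmetric] mult.commute)
  also have "\<dots> = (\<Sum>k = 0..K. \<Sum>j = 0..k * M.
      real (K choose k) * real ((k * M) choose j) * (-1) ^ (k + j) * y ^ j)"
    by (simp add: one_minus_power_binomial[of y] sum_distrib_left power_add mult_ac)
  finally show ?thesis .
qed

lemma has_bochner_integral_tail_weight_Bfun:
  assumes "0 < \<rho>" "s < 1" "0 \<le> \<beta>"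
  shows "has_bochner_integral lborel
    (\<lambda>t. tail_weight \<rho> s t * (1 - (1 - exp (- (\<beta> * t))) ^ M) ^ K) (Bfun M K \<rho> s \<beta>)"
proof -
  define F where "F j t = tail_weight \<rho> s t * exp (- ((real j * \<beta>) * t))" for j :: nat and t :: real
  define C where "C k j = real (K choose k) * real ((k * M) choose j) * (-1) ^ (k + j)" for k j :: nat
  have expand: "tail_weight \<rho> s t * (1 - (1 - exp (- (\<beta> * t))) ^ M) ^ K
      = (\<Sum>k = 0..K. \<Sum>j = 0..k * M. C k j * F j t)" for t
  proof -
    have "exp (- (\<beta> * t)) ^ j = exp (- ((real j * \<beta>) * t))" for j :: nat
      by (simp add: exp_of_nat_mult[symmetric])
    then show ?thesis
      unfolding one_minus_power_power_expand F_def C_def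
      by (simp add: sum_distrib_left mult_ac)
  qed
  have "has_bochner_integral lborel (F j) (inc_gamma_factor s (real j * \<beta> / \<rho>))" for j
    unfolding has_bochner_integral_iff F_def using assms
    by (auto intro!: integrable_tail_weight_mult simp: integral_tail_weight_exp)
  then have "has_bochner_integral lborel (\<lambda>t. \<Sum>k = 0..K. \<Sum>j = 0..k * M. C k j * F j t)
      (\<Sum>k = 0..K. \<Sum>j = 0..k * M. C k j * inc_gamma_factor s (real j * \<beta> / \<rho>))"
    by (intro has_bochner_integral_sum has_bochner_integral_mult_right)
  then show ?thesis
    by (simp only: expand Bfun_def C_def)
qed

section \<open>The expectation of (1 + \<rho> min X) powr (s - 1)\<close>

lemma (in prob_space) nn_integral_tail_weight_layer_cake:
  fixes Y :: "'a \<Rightarrow> real" and S :: "real \<Rightarrow> real"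
  assumes [measurable]: "Y \<in> borel_measurable M"
    and "AE \<omega> in M. 0 \<le> Y \<omega>"
    and survival: "\<And>t. 0 \<le> t \<Longrightarrow> prob {\<omega> \<in> space M. t < Y \<omega>} = S t"
    and "0 < \<rho>" "s < 1"
  shows "(\<integral>\<^sup>+\<omega>. ennreal ((1 - (1 + \<rho> * Y \<omega>) powr (s - 1)) / (1 - s)) \<partial>M)
    = (\<integral>\<^sup>+t. ennreal (tail_weight \<rho> s t * S t) \<partial>lborel)"
proof -
  interpret pair_sigma_finite lborel M
    by (intro pair_sigma_finite.intro sigma_finite_lborel prob_space_imp_sigma_finite prob_space_axioms)
  have [measurable]: "Measurable.pred (lborel \<Otimes>\<^sub>M M) (\<lambda>p. fst p \<in> {..<Y (snd p)})"
    unfolding lessThan_iff by measurable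
  have "(\<integral>\<^sup>+\<omega>. ennreal ((1 - (1 + \<rho> * Y \<omega>) powr (s - 1)) / (1 - s)) \<partial>M)
      = (\<integral>\<^sup>+\<omega>. (\<integral>\<^sup>+t. ennreal (tail_weight \<rho> s t) * indicator {..<Y \<omega>} t \<partial>lborel) \<partial>M)"
    using assms by (intro nn_integral_cong_AE) (auto elim!: eventually_mono simp: nn_integral_tail_weight_lessThan)
  also have "\<dots> = (\<integral>\<^sup>+t. (\<integral>\<^sup>+\<omega>. ennreal (tail_weight \<rho> s t) * indicator {..<Y \<omega>} t \<partial>M) \<partial>lborel)"
    by (rule Fubini') measurable
  also have "\<dots> = (\<integral>\<^sup>+t. ennreal (tail_weight \<rho> s t) * emeasure M {\<omega> \<in> space M. t < Y \<omega>} \<partial>lborel)"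
    by (subst nn_integral_cmult_indicator[symmetric])
       (auto intro!: nn_integral_cong split: split_indicator)
  also have "\<dots> = (\<integral>\<^sup>+t. ennreal (tail_weight \<rho> s t * S t) \<partial>lborel)"
  proof (intro nn_integral_cong)
    fix t :: real
    show "ennreal (tail_weight \<rho> s t) * emeasure M {\<omega> \<in> space M. t < Y \<omega>}
        = ennreal (tail_weight \<rho> s t * S t)"
    proof (cases "0 \<le> t")
      case True
      then show ?thesis
        using survival[OF True] measure_nonneg[of M "{\<omega> \<in> space M. t < Y \<omega>}"]
          tail_weight_nonneg[of \<rho> s t] \<open>0 < \<rho>\<close>
        by (simp add: emeasure_eq_measure ennreal_mult)
    qed (simp add: tail_weight_def)
  qed
  finally show ?thesis .
qed

lemma (in prob_space) expectation_one_plus_powr_eq: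
  fixes Y :: "'a \<Rightarrow> real" and S :: "real \<Rightarrow> real"
  assumes [measurable]: "Y \<in> borel_measurable M" "S \<in> borel_measurable borel"
    and Y_nonneg: "AE \<omega> in M. 0 \<le> Y \<omega>"
    and survival: "\<And>t. 0 \<le> t \<Longrightarrow> prob {\<omega> \<in> space M. t < Y \<omega>} = S t"
    and "0 < \<rho>" "s < 1"
  shows "expectation (\<lambda>\<omega>. (1 + \<rho> * Y \<omega>) powr (s - 1))
    = 1 - (1 - s) * (\<integral>t. tail_weight \<rho> s t * S t \<partial>lborel)"
proof -
  define \<psi> where "\<psi> \<omega> = (1 - (1 + \<rho> * Y \<omega>) powr (s - 1)) / (1 - s)" for \<omega>
  have [measurable]: "\<psi> \<in> borel_measurable M"
    unfolding \<psi>_def by measurable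
  have \<psi>_bounds: "AE \<omega> in M. 0 \<le> \<psi> \<omega> \<and> \<psi> \<omega> \<le> 1 / (1 - s)"
    using Y_nonneg
  proof eventually_elim
    case (elim \<omega>)
    then have "1 \<le> 1 + \<rho> * Y \<omega>"
      using \<open>0 < \<rho>\<close> by simp
    then have "(1 + \<rho> * Y \<omega>) powr (s - 1) \<le> (1 + \<rho> * Y \<omega>) powr 0"
      using \<open>s < 1\<close> by (intro powr_mono) auto
    then show ?case
      using \<open>1 \<le> 1 + \<rho> * Y \<omega>\<close> \<open>s < 1\<close> by (auto simp: \<psi>_def divide_right_mono)
  qed
  have \<psi>_int: "integrable M \<psi>"
    using \<psi>_bounds by (intro integrable_const_bound[where B = "1 / (1 - s)"]) auto
  have S_bounds: "0 \<le> S t \<and> S t \<le> 1" if "0 \<le> t" for t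
    using survival[OF that] by (metis measure_nonneg prob_le_1)
  have wS_nonneg: "0 \<le> tail_weight \<rho> s t * S t" for t
    using S_bounds[of t] tail_weight_nonneg[of \<rho> s t] \<open>0 < \<rho>\<close>
    by (cases "0 \<le> t") (auto simp: tail_weight_def)
  have "ennreal (expectation \<psi>) = (\<integral>\<^sup>+\<omega>. \<psi> \<omega> \<partial>M)"
    using \<psi>_bounds by (intro nn_integral_eq_integral[symmetric] \<psi>_int) (auto elim: eventually_mono)
  also have "\<dots> = (\<integral>\<^sup>+t. ennreal (tail_weight \<rho> s t * S t) \<partial>lborel)"
    unfolding \<psi>_def using assms by (intro nn_integral_tail_weight_layer_cake) auto
  also have "\<dots> = ennreal (\<integral>t. tail_weight \<rho> s t * S t \<partial>lborel)"
    using S_bounds wS_nonneg assms by (intro nn_integral_eq_integral integrable_tail_weight_mult) auto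
  finally have "expectation \<psi> = (\<integral>t. tail_weight \<rho> s t * S t \<partial>lborel)"
    using \<psi>_bounds wS_nonneg
    by (subst (asm) ennreal_inj) (auto intro!: integral_nonneg_AE integral_nonneg elim: eventually_mono)
  moreover have "(1 + \<rho> * Y \<omega>) powr (s - 1) = 1 - (1 - s) * \<psi> \<omega>" for \<omega>
    using \<open>s < 1\<close> by (simp add: \<psi>_def)
  ultimately show ?thesis
    using \<psi>_int by (simp add: prob_space)
qed

lemma (in prob_space) prob_Min_greater:
  fixes X :: "'i \<Rightarrow> 'a \<Rightarrow> real"
  assumes "indep_vars (\<lambda>_. borel) X I" "finite I" "I \<noteq> {}"
  shows "prob {\<omega> \<in> space M. t < Min ((\<lambda>i. X i \<omega>) ` I)} = (\<Prod>i\<in>I. prob {\<omega> \<in> space M. t < X i \<omega>})"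
proof -
  have "indep_events (\<lambda>i. {\<omega> \<in> space M. t < X i \<omega>}) I"
    by (rule indep_eventsI_indep_vars[OF assms(1)]) measurable
  then have "prob (\<Inter>i\<in>I. {\<omega> \<in> space M. t < X i \<omega>}) = (\<Prod>i\<in>I. prob {\<omega> \<in> space M. t < X i \<omega>})"
    using assms(2,3) by (auto simp: indep_events_def)
  moreover have "{\<omega> \<in> space M. t < Min ((\<lambda>i. X i \<omega>) ` I)} = (\<Inter>i\<in>I. {\<omega> \<in> space M. t < X i \<omega>})"
    using assms(2,3) by auto
  ultimately show ?thesis
    by simp
qed

lemma (in prob_space) AE_nonneg_if_cdf_vanishes:
  fixes X :: "'a \<Rightarrow> real"
  assumes [measurable]: "X \<in> borel_measurable M"
    and cdf: "\<And>x. x < 0 \<Longrightarrow> prob {\<omega> \<in> space M. X \<omega> \<le> x} = 0"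
  shows "AE \<omega> in M. 0 \<le> X \<omega>"
proof (rule AE_I')
  show "(\<Union>n. {\<omega> \<in> space M. X \<omega> \<le> - inverse (real (Suc n))}) \<in> null_sets M"
    using cdf by (intro null_sets_UN null_setsI) (auto simp: emeasure_eq_measure)
  show "{\<omega> \<in> space M. \<not> 0 \<le> X \<omega>} \<subseteq> (\<Union>n. {\<omega> \<in> space M. X \<omega> \<le> - inverse (real (Suc n))})"
  proof safe
    fix \<omega> assume "\<omega> \<in> space M" "\<not> 0 \<le> X \<omega>"
    then obtain n where "inverse (real (Suc n)) < - X \<omega>"
      using reals_Archimedean[of "- X \<omega>"] by auto
    then have "X \<omega> \<le> - inverse (real (Suc n))"
      by simp
    then show "\<omega> \<in> (\<Union>n. {\<omega> \<in> space M. X \<omega> \<le> - inverse (real (Suc n))})"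
      using \<open>\<omega> \<in> space M\<close> by blast
  qed
qed

lemma (in prob_space) prob_greater_eq_erlang_tail:
  fixes X :: "'a \<Rightarrow> real"
  assumes [measurable]: "X \<in> borel_measurable M"
    and "prob {\<omega> \<in> space M. X \<omega> \<le> x} = 1 - upper_inc_gamma (real (Suc k)) x / Gamma (real (Suc k))"
    and "0 \<le> x"
  shows "prob {\<omega> \<in> space M. x < X \<omega>} = erlang_tail k x"
proof -
  have "{\<omega> \<in> space M. x < X \<omega>} = space M - {\<omega> \<in> space M. X \<omega> \<le> x}"
    by auto
  then have "prob {\<omega> \<in> space M. x < X \<omega>} = 1 - prob {\<omega> \<in> space M. X \<omega> \<le> x}"
    by (simp add: prob_compl)
  moreover have "Gamma (real (Suc k)) = fact k"
    using Gamma_fact[of k] by (simp add: add.commute)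
  ultimately show ?thesis
    using assms upper_inc_gamma_Suc_eq_erlang_tail[OF \<open>0 \<le> x\<close>, of k] by simp
qed

lemma integral_tail_weight_erlang_tail_power_bounds:
  assumes "0 < \<rho>" "s < 1" "0 < b" "b ^ Suc k * fact (Suc k) = 1"
  shows "Bfun (Suc k) K \<rho> s 1 \<le> (\<integral>t. tail_weight \<rho> s t * erlang_tail k t ^ K \<partial>lborel)"
    and "(\<integral>t. tail_weight \<rho> s t * erlang_tail k t ^ K \<partial>lborel) \<le> Bfun (Suc k) K \<rho> s b"
proof -
  have tail_int: "integrable lborel (\<lambda>t. tail_weight \<rho> s t * erlang_tail k t ^ K)"
    by (intro integrable_tail_weight_mult assms(1,2))
      (auto simp: erlang_tail_nonneg erlang_tail_le_one intro!: power_le_one)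
  have weighted_mono: "tail_weight \<rho> s t * f t ^ K \<le> tail_weight \<rho> s t * g t ^ K"
    if "\<And>t. 0 \<le> t \<Longrightarrow> 0 \<le> f t \<and> f t \<le> g t" for f g t
    using that[of t] tail_weight_nonneg[of \<rho> s t] \<open>0 < \<rho>\<close>
    by (cases "0 \<le> t") (auto intro!: mult_left_mono power_mono simp: tail_weight_def)
  have exp_power_le_one: "(1 - exp (- t)) ^ Suc k \<le> 1" if "0 \<le> t" for t :: real
    using that by (intro power_le_one) auto
  have lower: "1 - (1 - exp (- t)) ^ Suc k \<le> erlang_tail k t" if "0 \<le> t" for t :: real
    using one_minus_erlang_tail_le[OF that, of k] by linarith
  note Bfun_1 = has_bochner_integral_tail_weight_Bfun[OF assms(1,2) zero_le_one, of "Suc k" K]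
  note Bfun_b = has_bochner_integral_tail_weight_Bfun[OF assms(1,2) less_imp_le[OF assms(3)], of "Suc k" K]
  show "Bfun (Suc k) K \<rho> s 1 \<le> (\<integral>t. tail_weight \<rho> s t * erlang_tail k t ^ K \<partial>lborel)"
    unfolding has_bochner_integral_integral_eq[OF Bfun_1, symmetric]
    using lower exp_power_le_one
    by (intro integral_mono integrable.intros[OF Bfun_1] tail_int weighted_mono) auto
  show "(\<integral>t. tail_weight \<rho> s t * erlang_tail k t ^ K \<partial>lborel) \<le> Bfun (Suc k) K \<rho> s b"
    unfolding has_bochner_integral_integral_eq[OF Bfun_b, symmetric]
    using erlang_tail_le_alzer[OF _ assms(3,4)]
    by (intro integral_mono integrable.intros[OF Bfun_b] tail_int weighted_mono) (auto simp: erlang_tail_nonneg)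
qed

lemma (in prob_space) expectation_one_plus_powr_Min_erlang:
  fixes X :: "nat \<Rightarrow> 'a \<Rightarrow> real"
  assumes "K \<ge> 1" "0 < \<rho>" "s < 1"
    and X_meas: "\<And>i. i < K \<Longrightarrow> X i \<in> borel_measurable M"
    and indep: "indep_vars (\<lambda>_. borel) X {..<K}"
    and cdf: "\<And>i x. i < K \<Longrightarrow> prob {\<omega> \<in> space M. X i \<omega> \<le> x}
      = (if 0 \<le> x then 1 - upper_inc_gamma (real (Suc k)) x / Gamma (real (Suc k)) else 0)"
  shows "expectation (\<lambda>\<omega>. (1 + \<rho> * Min ((\<lambda>i. X i \<omega>) ` {..<K})) powr (s - 1))
    = 1 - (1 - s) * (\<integral>t. tail_weight \<rho> s t * erlang_tail k t ^ K \<partial>lborel)"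
proof (rule expectation_one_plus_powr_eq)
  have "0 \<in> {..<K}"
    using \<open>K \<ge> 1\<close> by simp
  then have nonempty: "{..<K} \<noteq> {}"
    by blast
  show "(\<lambda>\<omega>. Min ((\<lambda>i. X i \<omega>) ` {..<K})) \<in> borel_measurable M"
    using X_meas by measurable
  have "AE \<omega> in M. \<forall>i\<in>{..<K}. 0 \<le> X i \<omega>"
    using X_meas cdf by (intro AE_finite_allI AE_nonneg_if_cdf_vanishes) auto
  then show "AE \<omega> in M. 0 \<le> Min ((\<lambda>i. X i \<omega>) ` {..<K})"
    by eventually_elim (use nonempty in \<open>simp add: Min_ge_iff\<close>)
  fix t :: real
  assume "0 \<le> t"
  have "prob {\<omega> \<in> space M. t < Min ((\<lambda>i. X i \<omega>) ` {..<K})}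
      = (\<Prod>i\<in>{..<K}. prob {\<omega> \<in> space M. t < X i \<omega>})"
    using indep nonempty by (intro prob_Min_greater) auto
  also have "\<dots> = (\<Prod>i\<in>{..<K}. erlang_tail k t)"
    using X_meas cdf \<open>0 \<le> t\<close> by (intro prod.cong refl prob_greater_eq_erlang_tail) auto
  finally show "prob {\<omega> \<in> space M. t < Min ((\<lambda>i. X i \<omega>) ` {..<K})} = erlang_tail k t ^ K"
    by simp
qed (use assms in auto)

lemma power_fact_powr_inverse:
  assumes "0 < n"
  shows "(fact n powr (- 1 / real n)) ^ n * fact n = (1 :: real)"
proof -
  have "(fact n powr (- 1 / real n)) ^ n = (fact n :: real) powr (real n * (- 1 / real n))"
    by (rule powr_power) simp
  also have "\<dots> = inverse (fact n)"
    using assms by (simp add: powr_minus)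
  finally show ?thesis
    by simp
qed

theorem lemma1:
  fixes M K :: nat and \<rho> s :: real
    and P :: "'a measure" and X :: "nat \<Rightarrow> 'a \<Rightarrow> real"
  assumes "prob_space P"
    and "M \<ge> 1" and "K \<ge> 1" and "\<rho> > 0"
    and "\<forall>k<K. X k \<in> borel_measurable P"
    and "prob_space.indep_vars P (\<lambda>_. borel) X {..<K}"
    and "\<forall>k<K. \<forall>x::real. measure P {\<omega> \<in> space P. X k \<omega> \<le> x}
           = (if x \<ge> 0 then 1 - upper_inc_gamma (real M) x / Gamma (real M) else 0)"
    and "s < 1"
  shows "1 + (s - 1) * Bfun M K \<rho> s (Gamma (1 + real M) powr (- 1 / real M))
           \<le> (\<integral>\<omega>. (1 + \<rho> * Min {X k \<omega> | k. k < K}) powr (s - 1) \<partial>P)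
      \<and> (\<integral>\<omega>. (1 + \<rho> * Min {X k \<omega> | k. k < K}) powr (s - 1) \<partial>P)
           \<le> 1 + (s - 1) * Bfun M K \<rho> s 1"
proof -
  interpret prob_space P by fact
  obtain k where M: "M = Suc k"
    using \<open>M \<ge> 1\<close> by (cases M) auto
  define b where "b = Gamma (1 + real M) powr (- 1 / real M)"
  have "Gamma (1 + real M) = fact M"
    using Gamma_fact[of M] by (simp add: add.commute)
  then have b: "0 < b" "b ^ Suc k * fact (Suc k) = 1"
    using power_fact_powr_inverse[of M] by (simp_all add: b_def M)
  have "{X i \<omega> | i. i < K} = (\<lambda>i. X i \<omega>) ` {..<K}" for \<omega>
    by auto
  moreover have "expectation (\<lambda>\<omega>. (1 + \<rho> * Min ((\<lambda>i. X i \<omega>) ` {..<K})) powr (s - 1))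
      = 1 - (1 - s) * (\<integral>t. tail_weight \<rho> s t * erlang_tail k t ^ K \<partial>lborel)"
    using assms by (intro expectation_one_plus_powr_Min_erlang) (auto simp: M)
  moreover have "(1 - s) * Bfun M K \<rho> s 1 \<le> (1 - s) * (\<integral>t. tail_weight \<rho> s t * erlang_tail k t ^ K \<partial>lborel)"
    "(1 - s) * (\<integral>t. tail_weight \<rho> s t * erlang_tail k t ^ K \<partial>lborel) \<le> (1 - s) * Bfun M K \<rho> s b"
    using integral_tail_weight_erlang_tail_power_bounds[OF assms(4,8) b, of K] \<open>s < 1\<close>
    by (simp_all add: M)
  ultimately show ?thesis
    unfolding b_def[symmetric] by (simp add: algebra_simps)
qed

end
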